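(* Let $\mu$ be a probability measure, equip $L^1(\mu)$ with the Luxemburg norm $\|\cdot\|$ associated to the Orlicz function $M$ (defined in the context), and let $X\subset L^1(\mu)$ be a closed subspace such that $G_X(t)=O(1/t^{p-1})$ as $t\to+\infty$ for some $p>1$. Then, as $\tau\to 0^+$: (1) $\rho_X(\tau)=O(\tau^2)$ if $p>2$; (2) $\rho_X(\tau)=O(\tau^p)$ if $1<p<2$; (3) $\rho_X(\tau)=O(\tau^2|\log\tau|)$ if $p=2$.
   Context: Let $\varphi(t)=2$ for $0\le t\le 1$ and $\varphi(t)=8/(1+t)^2$ for $t>1$, and let $M(t)=\int_0^{|t|}\varphi(u)(|t|-u)\,du$ for $t\in\mathbb{R}$. The Luxemburg norm is $\|f\|=\inf\{\lambda>0:\int_\Omega M(f/\lambda)\,d\mu\le 1\}$. For $f\in L^1(\mu)$ let $F_f(t)=\mu(\{|f|>t\})$, and for a subspace $X$ let $G_X(t)=\sup\{\int_t^{\infty}F_f(u)\,du : f\in X,\ \|f\|_1=1\}$, $t>0$. The modulus of smoothness of $(X,\|\cdot\|)$ is $\rho_X(\tau)=\sup\{\tfrac{\|x+\tau y\|+\|x-\tau y\|}{2}-1 : x,y\in X,\ \|x\|=\|y\|=1\}$. *)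

theory Defs
  imports "HOL-Analysis.Analysis" "HOL-Probability.Probability"
begin

definition orl_phi :: "real \<Rightarrow> real" where
  "orl_phi t = (if t \<le> 1 then 2 else 8 / (1 + t)\<^sup>2)"

definition orl_M :: "real \<Rightarrow> real" where
  "orl_M t = integral {0..\<bar>t\<bar>} (\<lambda>u. orl_phi u * (\<bar>t\<bar> - u))"

definition lux_norm :: "'a measure \<Rightarrow> ('a \<Rightarrow> real) \<Rightarrow> real" where
  "lux_norm mu f = Inf {l::real. l > 0 \<and>
       (\<integral>\<^sup>+ x. ennreal (orl_M (f x / l)) \<partial>mu) \<le> 1}"

definition L1_norm :: "'a measure \<Rightarrow> ('a \<Rightarrow> real) \<Rightarrow> real" where
  "L1_norm mu f = (\<integral>x. \<bar>f x\<bar> \<partial>mu)"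

definition distr_fun :: "'a measure \<Rightarrow> ('a \<Rightarrow> real) \<Rightarrow> real \<Rightarrow> real" where
  "distr_fun mu f t = measure mu {x \<in> space mu. \<bar>f x\<bar> > t}"

definition G_fun :: "'a measure \<Rightarrow> ('a \<Rightarrow> real) set \<Rightarrow> real \<Rightarrow> ennreal" where
  "G_fun mu X t = (SUP f \<in> {f \<in> X. L1_norm mu f = 1}.
       (\<integral>\<^sup>+ u. indicator {t..} u * ennreal (distr_fun mu f u) \<partial>lborel))"

text \<open>Modulus of smoothness of X with the Luxemburg norm (sup of the empty set is -\<infinity>).\<close>
definition rho_mod :: "'a measure \<Rightarrow> ('a \<Rightarrow> real) set \<Rightarrow> real \<Rightarrow> ereal" where
  "rho_mod mu X \<tau> = Sup {ereal ((lux_norm mu (\<lambda>w. x w + \<tau> * y w)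
        + lux_norm mu (\<lambda>w. x w - \<tau> * y w)) / 2 - 1) | x y.
        x \<in> X \<and> y \<in> X \<and> lux_norm mu x = 1 \<and> lux_norm mu y = 1}"

definition closed_L1_subspace :: "'a measure \<Rightarrow> ('a \<Rightarrow> real) set \<Rightarrow> bool" where
  "closed_L1_subspace mu X \<longleftrightarrow>
     X \<subseteq> {f. integrable mu f} \<and> (\<lambda>_. 0) \<in> X \<and>
     (\<forall>f\<in>X. \<forall>g\<in>X. (\<lambda>w. f w + g w) \<in> X) \<and>
     (\<forall>f\<in>X. \<forall>c::real. (\<lambda>w. c * f w) \<in> X) \<and>
     (\<forall>fs f. (\<forall>n. fs n \<in> X) \<longrightarrow> integrable mu f \<longrightarrow>
        ((\<lambda>n. L1_norm mu (\<lambda>w. fs n w - f w)) \<longlonglongrightarrow> 0) \<longrightarrow> f \<in> X)"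

end

theory Submission
  imports Defs "HOL-Real_Asymp.Real_Asymp"
begin

text \<open>
  Strategy.  \<open>M\<close> is \<open>t\<^sup>2\<close> near 0 and grows linearly at infinity; it is \<open>C\<^sup>1\<close>, convex, with
  \<open>|M'| \<le> 6\<close> and \<open>0 \<le> M'' \<le> 2\<close>.  Hence its Taylor remainder is bounded by
  \<open>Q(b) = 12 min(b\<^sup>2, |b|)\<close>.  For unit vectors \<open>x, y\<close>, expanding the modular
  \<open>I(f) = \<integral> M(f)\<close> of \<open>(x \<plusminus> \<tau> y)/(1 + \<epsilon>\<^sub>\<plusminus>)\<close> around \<open>x\<close> shows
  \<open>\<parallel>x \<plusminus> \<tau> y\<parallel> \<le> 1 + \<epsilon>\<^sub>\<plusminus>\<close>, where the first-order terms of \<open>\<epsilon>\<^sub>+\<close> and \<open>\<epsilon>\<^sub>-\<close> cancel, so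
  \<open>\<rho>\<^sub>X(\<tau>) \<le> 1152 (\<integral> Q(\<tau> y) + \<integral> Q(1440 \<tau> x))\<close>.  Finally \<open>\<integral> Q(s g)\<close> is estimated by a dyadic
  decomposition through the tail integrals \<open>H\<^sub>g(t) = \<integral> (|g| - t)\<^sup>+ = \<integral>\<^sub>t\<^sup>\<infinity> F\<^sub>g\<close>, which the
  hypothesis \<open>G\<^sub>X(t) = O(t\<^sup>1\<^sup>-\<^sup>p)\<close> controls; summing the dyadic series gives \<open>O(s\<^sup>2)\<close>,
  \<open>O(s\<^sup>p)\<close> or \<open>O(s\<^sup>2 |log s|)\<close> according as \<open>p > 2\<close>, \<open>p < 2\<close> or \<open>p = 2\<close>.
\<close>

lemma orl_M_integral_small:
  assumes "0 \<le> a" "a \<le> 1"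
  shows "integral {0..a} (\<lambda>u. orl_phi u * (a - u)) = a\<^sup>2"
proof -
  have "((\<lambda>u. 2 * (a - u)) has_integral ((\<lambda>u. 2*a*u - u\<^sup>2) a - (\<lambda>u. 2*a*u - u\<^sup>2) 0)) {0..a}"
    by (rule fundamental_theorem_of_calculus)
       (use assms in \<open>auto intro!: derivative_eq_intros
          simp flip: has_real_derivative_iff_has_vector_derivative\<close>)
  then have "((\<lambda>u. 2 * (a - u)) has_integral a\<^sup>2) {0..a}"
    by (simp add: power2_eq_square)
  then have "((\<lambda>u. orl_phi u * (a - u)) has_integral a\<^sup>2) {0..a}"
    by (rule has_integral_eq[rotated]) (use assms in \<open>auto simp: orl_phi_def\<close>)
  then show ?thesis by (rule integral_unique)
qed

lemma orl_M_integral_large: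
  assumes "1 < a"
  shows "integral {0..a} (\<lambda>u. orl_phi u * (a - u)) = 6*a - 5 - 8 * ln ((1+a)/2)"
proof -
  have "((\<lambda>u. 2 * (a - u)) has_integral ((\<lambda>u. 2*a*u - u\<^sup>2) 1 - (\<lambda>u. 2*a*u - u\<^sup>2) 0)) {0..1}"
    by (rule fundamental_theorem_of_calculus)
       (auto intro!: derivative_eq_intros simp flip: has_real_derivative_iff_has_vector_derivative)
  then have "((\<lambda>u. 2 * (a - u)) has_integral (2*a - 1)) {0..1}"
    by simp
  then have head: "((\<lambda>u. orl_phi u * (a - u)) has_integral (2*a - 1)) {0..1}"
    by (rule has_integral_eq[rotated]) (auto simp: orl_phi_def)
  define F where "F = (\<lambda>u. - 8 * (1+a) / (1+u) - 8 * ln (1+u))"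
  have "((\<lambda>u. 8 * (a - u) / (1+u)\<^sup>2) has_integral (F a - F 1)) {1..a}"
  proof (rule fundamental_theorem_of_calculus)
    fix x assume x: "x \<in> {1..a}"
    have "((\<lambda>u. - 8 * (1+a) / (1+u) - 8 * ln (1+u)) has_real_derivative
           8 * (1+a) / (1+x)\<^sup>2 - 8 / (1+x)) (at x within {1..a})"
      using x by (auto intro!: derivative_eq_intros simp: power2_eq_square)
    moreover have "8 * (1+a) / (1+x)\<^sup>2 - 8 / (1+x) = 8 * (a - x) / (1+x)\<^sup>2"
      using x by (simp add: divide_simps power2_eq_square)
    ultimately show "(F has_vector_derivative 8 * (a - x) / (1+x)\<^sup>2) (at x within {1..a})"
      by (simp add: F_def has_real_derivative_iff_has_vector_derivative)
  qed (use assms in simp)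
  then have tail: "((\<lambda>u. orl_phi u * (a - u)) has_integral (F a - F 1)) {1..a}"
    by (rule has_integral_eq[rotated]) (auto simp: orl_phi_def)
  have "((\<lambda>u. orl_phi u * (a - u)) has_integral (2*a - 1 + (F a - F 1))) {0..a}"
    by (rule has_integral_combine[OF _ _ head tail]) (use assms in auto)
  moreover have "2*a - 1 + (F a - F 1) = 6*a - 5 - 8 * ln ((1+a)/2)"
    using assms by (simp add: F_def ln_div field_simps)
  ultimately show ?thesis by (metis integral_unique)
qed

lemma orl_M_closed_form:
  "orl_M t = (if t < -1 then -6*t - 5 - 8*ln((1-t)/2)
              else if t \<le> 1 then t\<^sup>2 else 6*t - 5 - 8*ln((1+t)/2))"
  using orl_M_integral_small[of "\<bar>t\<bar>"] orl_M_integral_large[of "\<bar>t\<bar>"]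
  unfolding orl_M_def by (auto simp: abs_if)

lemma orl_M_small: "\<bar>t\<bar> \<le> 1 \<Longrightarrow> orl_M t = t\<^sup>2"
  by (auto simp: orl_M_closed_form)

lemma orl_M_even: "orl_M (-t) = orl_M t"
  by (simp add: orl_M_closed_form)

definition orl_dM :: "real \<Rightarrow> real" where
  "orl_dM t = (if t < -1 then -6 + 8/(1-t) else if t \<le> 1 then 2*t else 6 - 8/(1+t))"

lemma orl_dM_odd: "orl_dM (-t) = - orl_dM t"
  by (simp add: orl_dM_def)

lemma has_real_derivative_glue:
  assumes "(f has_real_derivative D) (at x within {..x})"
      and "(f has_real_derivative D) (at x within {x..})"
  shows "(f has_real_derivative D) (at x)"
proof -
  have "((\<lambda>y. (f y - f x) / (y - x)) \<longlongrightarrow> D) (at x within ({..x} \<union> {x..}))"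
    using assms unfolding has_field_derivative_iff by (intro Lim_Un)
  moreover have "{..x} \<union> {x..} = UNIV" by auto
  ultimately show ?thesis unfolding has_field_derivative_iff by simp
qed

lemma orl_M_deriv_right:
  assumes "t > -1" shows "(orl_M has_real_derivative orl_dM t) (at t)"
proof -
  have sq: "((\<lambda>t. t\<^sup>2) has_real_derivative 2*t) (at t within S)" for S
    by (auto intro!: derivative_eq_intros)
  have log: "((\<lambda>t. 6*t - 5 - 8*ln((1+t)/2)) has_real_derivative (6 - 8/(1+t))) (at t within S)" for S
    using assms by (auto intro!: derivative_eq_intros simp: field_simps)
  consider "t < 1" | "t = 1" | "t > 1" by linarith
  then show ?thesis
  proof cases
    case 1
    have "(orl_M has_real_derivative 2*t) (at t)"
      by (rule has_field_derivative_transform_within_open[OF sq, of "{-1<..<1}"])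
         (use assms 1 in \<open>auto simp: orl_M_closed_form\<close>)
    then show ?thesis using assms 1 by (simp add: orl_dM_def)
  next
    case 2
    have "(orl_M has_real_derivative 2*t) (at t within {..t})"
      by (rule has_field_derivative_transform_within[OF sq, of 1])
         (use 2 in \<open>auto simp: orl_M_closed_form dist_real_def\<close>)
    moreover have "(orl_M has_real_derivative 6 - 8/(1+t)) (at t within {t..})"
      by (rule has_field_derivative_transform_within[OF log, of 1])
         (use 2 in \<open>auto simp: orl_M_closed_form dist_real_def\<close>)
    ultimately show ?thesis
      using 2 by (intro has_real_derivative_glue) (auto simp: orl_dM_def)
  next
    case 3
    have "(orl_M has_real_derivative 6 - 8/(1+t)) (at t)"
      by (rule has_field_derivative_transform_within_open[OF log, of "{1<..}"])
         (use 3 in \<open>auto simp: orl_M_closed_form\<close>)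
    then show ?thesis using 3 by (simp add: orl_dM_def)
  qed
qed

text \<open>By evenness of \<open>M\<close> and oddness of \<open>M'\<close>, the case \<open>t \<le> -1\<close> reduces to the previous lemma.\<close>
lemma orl_M_deriv: "(orl_M has_real_derivative orl_dM t) (at t)"
proof (cases "t > -1")
  case False
  have "((\<lambda>s. orl_M (- s)) has_real_derivative orl_dM (- t) * - 1) (at t)"
    by (rule DERIV_chain2[OF orl_M_deriv_right]) (use False in \<open>auto intro!: derivative_eq_intros\<close>)
  then show ?thesis by (simp add: orl_M_even orl_dM_odd)
qed (rule orl_M_deriv_right)

lemma orl_dM_bound: "\<bar>orl_dM t\<bar> \<le> 6"
proof -
  have "t > 1 \<Longrightarrow> 8/(1+t) \<le> 8" and "t < -1 \<Longrightarrow> 8/(1-t) \<le> 8"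
    by (simp_all add: field_simps)
  then show ?thesis unfolding orl_dM_def by (auto simp: abs_if)
qed

lemma orl_dM_mono_lipschitz:
  assumes "s \<le> t" shows "orl_dM s \<le> orl_dM t \<and> orl_dM t - orl_dM s \<le> 2*(t-s)"
proof -
  have outer: "8/(1+x) - 8/(1+y) \<le> 2*(y - x) \<and> 8/(1+y) \<le> 8/(1+x)"
    if "1 \<le> x" "x \<le> y" for x y :: real
  proof -
    have "8/(1+x) - 8/(1+y) = 8*(y-x)/((1+x)*(1+y))" using that by (simp add: field_simps)
    also have "\<dots> \<le> 8*(y-x)/4"
      using that mult_mono[of 2 "1+x" 2 "1+y"] by (intro divide_left_mono) auto
    finally have "8/(1+x) - 8/(1+y) \<le> 2*(y - x)" by simp
    moreover have "8/(1+y) \<le> 8/(1+x)" using that by (intro divide_left_mono) auto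
    ultimately show ?thesis by simp
  qed
  have junction: "6 - 8/(1+y) \<le> 2*y \<and> 2 \<le> 6 - 8/(1+y)" if "1 \<le> y" for y :: real
  proof -
    have "6*(1+y) - 8 \<le> 2*y*(1+y)" using zero_le_square[of "y-1"] by (auto simp: algebra_simps)
    moreover have "8 \<le> 4*(1+y)" using that by simp
    ultimately show ?thesis using that by (simp add: field_simps)
  qed
  consider "t < -1" | "s < -1 \<and> -1 \<le> t \<and> t \<le> 1" | "s < -1 \<and> 1 < t" | "-1 \<le> s \<and> t \<le> 1"
    | "-1 \<le> s \<and> s \<le> 1 \<and> 1 < t" | "1 < s" using assms by linarith
  then show ?thesis
  proof cases
    case 1
    with outer[of "-t" "-s"] assms show ?thesis by (simp add: orl_dM_def)
  next
    case 2
    with junction[of "-s"] show ?thesis by (simp add: orl_dM_def)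
  next
    case 3
    with junction[of "-s"] junction[of t] show ?thesis by (simp add: orl_dM_def)
  next
    case 4
    then show ?thesis using assms by (simp add: orl_dM_def)
  next
    case 5
    with junction[of t] show ?thesis by (simp add: orl_dM_def)
  next
    case 6
    with outer[of s t] assms show ?thesis by (simp add: orl_dM_def)
  qed
qed

lemma nonpos_of_deriv_sign:
  fixes f :: "real \<Rightarrow> real"
  assumes deriv: "\<And>s. (f has_real_derivative f' s) (at s)" and zero: "f 0 = 0"
    and right: "\<And>s. s \<ge> 0 \<Longrightarrow> f' s \<le> 0" and left: "\<And>s. s \<le> 0 \<Longrightarrow> f' s \<ge> 0"
  shows "f b \<le> 0"
proof (cases "b \<ge> 0")
  case True
  have "f b \<le> f 0"
    by (rule DERIV_nonpos_imp_nonincreasing[OF True]) (use deriv right in blast)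
  then show ?thesis using zero by simp
next
  case False
  have "f b \<le> f 0"
    by (rule DERIV_nonneg_imp_nondecreasing) (use False deriv left in auto)
  then show ?thesis using zero by simp
qed

lemma orl_M_tangent: "orl_M a + orl_dM a * b \<le> orl_M (a+b)"
proof -
  have "(\<lambda>s. orl_M a + orl_dM a * s - orl_M (a+s)) b \<le> 0"
  proof (rule nonpos_of_deriv_sign[where f = "\<lambda>s. orl_M a + orl_dM a * s - orl_M (a+s)"
                                     and f' = "\<lambda>s. orl_dM a - orl_dM (a+s)"])
    fix s
    show "((\<lambda>s. orl_M a + orl_dM a * s - orl_M (a+s)) has_real_derivative orl_dM a - orl_dM (a+s)) (at s)"
      by (rule derivative_eq_intros DERIV_chain2[OF orl_M_deriv] refl | simp)+
    show "s \<ge> 0 \<Longrightarrow> orl_dM a - orl_dM (a+s) \<le> 0" using orl_dM_mono_lipschitz[of a "a+s"] by simp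
    show "s \<le> 0 \<Longrightarrow> orl_dM a - orl_dM (a+s) \<ge> 0" using orl_dM_mono_lipschitz[of "a+s" a] by simp
  qed simp
  then show ?thesis by simp
qed

text \<open>Second-order Taylor bound coming from \<open>M'' \<le> 2\<close>.\<close>
lemma orl_M_taylor_square: "orl_M (a+b) - orl_M a - orl_dM a * b \<le> b\<^sup>2"
proof -
  have "(\<lambda>s. orl_M (a+s) - orl_M a - orl_dM a * s - s\<^sup>2) b \<le> 0"
  proof (rule nonpos_of_deriv_sign[where f = "\<lambda>s. orl_M (a+s) - orl_M a - orl_dM a * s - s\<^sup>2"
                                     and f' = "\<lambda>s. orl_dM (a+s) - orl_dM a - 2 * s"])
    fix s
    show "((\<lambda>s. orl_M (a+s) - orl_M a - orl_dM a * s - s\<^sup>2) has_real_derivative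
            orl_dM (a+s) - orl_dM a - 2 * s) (at s)"
      by (rule derivative_eq_intros DERIV_chain2[OF orl_M_deriv] refl | simp)+
    show "s \<ge> 0 \<Longrightarrow> orl_dM (a+s) - orl_dM a - 2 * s \<le> 0"
      using orl_dM_mono_lipschitz[of a "a+s"] by simp
    show "s \<le> 0 \<Longrightarrow> orl_dM (a+s) - orl_dM a - 2 * s \<ge> 0"
      using orl_dM_mono_lipschitz[of "a+s" a] by simp
  qed simp
  then show ?thesis by simp
qed

text \<open>Tangent lines of slope at most 6 give the Lipschitz bound.\<close>
lemma orl_M_lipschitz: "\<bar>orl_M u - orl_M v\<bar> \<le> 6 * \<bar>u - v\<bar>"
proof -
  have slope: "\<bar>orl_dM w * d\<bar> \<le> 6 * \<bar>d\<bar>" for w d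
    using orl_dM_bound[of w] by (simp add: abs_mult mult_right_mono)
  have "orl_M v + orl_dM v * (u - v) \<le> orl_M u" "orl_M u + orl_dM u * (v - u) \<le> orl_M v"
    using orl_M_tangent[of v "u - v"] orl_M_tangent[of u "v - u"] by simp_all
  moreover have "\<bar>orl_dM v * (u - v)\<bar> \<le> 6 * \<bar>u - v\<bar>" "\<bar>orl_dM u * (v - u)\<bar> \<le> 6 * \<bar>u - v\<bar>"
    using slope[of v "u - v"] slope[of u "v - u"] by (simp_all only: abs_minus_commute)
  ultimately show ?thesis by (simp only: abs_le_iff) linarith
qed

text \<open>Consequences of convexity: \<open>M \<ge> 0\<close>, since \<open>M(0) = M'(0) = 0\<close>.\<close>
lemma orl_M_nonneg: "0 \<le> orl_M t"
  using orl_M_tangent[of 0 t] by (simp add: orl_M_small orl_dM_def)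

text \<open>\<open>M\<close> is nondecreasing in \<open>|t|\<close>, since \<open>M' \<ge> 0\<close> on \<open>[0,\<infinity>)\<close>.\<close>
lemma orl_M_mono: assumes "\<bar>s\<bar> \<le> \<bar>t\<bar>" shows "orl_M s \<le> orl_M t"
proof -
  have abs_eq: "orl_M \<bar>x\<bar> = orl_M x" for x
    by (cases "x \<ge> 0") (auto simp: orl_M_even)
  have "orl_dM 0 = 0" by (simp add: orl_dM_def)
  then have "0 \<le> orl_dM \<bar>s\<bar>" using orl_dM_mono_lipschitz[of 0 "\<bar>s\<bar>"] by simp
  then have "0 \<le> orl_dM \<bar>s\<bar> * (\<bar>t\<bar> - \<bar>s\<bar>)" using assms by simp
  then have "orl_M \<bar>s\<bar> \<le> orl_M \<bar>t\<bar>"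
    using orl_M_tangent[of "\<bar>s\<bar>" "\<bar>t\<bar> - \<bar>s\<bar>"] by simp
  then show ?thesis by (simp add: abs_eq)
qed

lemma orl_M_le_linear: "orl_M t \<le> 6 * \<bar>t\<bar>"
  using orl_M_lipschitz[of t 0] by (simp add: orl_M_small)

text \<open>Linear lower bound, from the tangents at \<open>\<plusminus>1\<close>; it relates the modular to the \<open>L\<^sup>1\<close>-norm.\<close>
lemma orl_M_ge_linear: "2 * \<bar>t\<bar> - 1 \<le> orl_M t"
  using orl_M_tangent[of 1 "t - 1"] orl_M_tangent[of "-1" "t + 1"]
  by (auto simp: orl_M_small orl_dM_def abs_if)

text \<open>The tangent at \<open>a\<close> evaluated at 0: \<open>M(a) \<le> M'(a) a\<close>.\<close>
lemma orl_M_le_dM: "orl_M a \<le> orl_dM a * a"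
  using orl_M_tangent[of a "-a"] by (simp add: orl_M_small)

text \<open>The \<open>\<Delta>\<^sub>2\<close>-condition for \<open>M\<close>, used to bound the modular of a function of norm 1 from below.\<close>
lemma orl_M_double: "orl_M (2*t) \<le> 48 * orl_M t"
proof -
  consider "\<bar>t\<bar> \<le> 1/2" | "1/2 < \<bar>t\<bar> \<and> \<bar>t\<bar> \<le> 1" | "1 < \<bar>t\<bar>" by linarith
  then show ?thesis
  proof cases
    case 1
    then show ?thesis using orl_M_small[of t] orl_M_small[of "2*t"] by (simp add: power2_eq_square)
  next
    case 2
    have "orl_M (2*t) \<le> 12 * \<bar>t\<bar>" using orl_M_le_linear[of "2*t"] by simp
    also have "\<dots> \<le> 48 * (\<bar>t\<bar> * \<bar>t\<bar>)" using 2 mult_right_mono[of 12 "48 * \<bar>t\<bar>" "\<bar>t\<bar>"] by simp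
    also have "\<dots> = 48 * orl_M t" using orl_M_small[of t] 2 by (simp add: power2_eq_square)
    finally show ?thesis .
  next
    case 3
    then show ?thesis using orl_M_le_linear[of "2*t"] orl_M_ge_linear[of t] by simp
  qed
qed

lemma orl_M_continuous: "continuous_on UNIV orl_M"
  using orl_M_deriv by (meson DERIV_isCont continuous_at_imp_continuous_on)

lemma orl_M_borel[measurable]: "orl_M \<in> borel_measurable borel"
  by (rule borel_measurable_continuous_onI[OF orl_M_continuous])

lemma orl_dM_borel[measurable]: "orl_dM \<in> borel_measurable borel"
  by (rule borel_measurable_mono) (use orl_dM_mono_lipschitz in \<open>auto simp: mono_def\<close>)

text \<open>The majorant \<open>Q(b) = 12 min(b\<^sup>2, |b|)\<close> of the Taylor remainder of \<open>M\<close>: quadratic for small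
  increments (from \<open>M'' \<le> 2\<close>) and linear for large ones (from \<open>|M'| \<le> 6\<close>).\<close>
definition taylor_maj :: "real \<Rightarrow> real" where
  "taylor_maj b = 12 * min (b\<^sup>2) \<bar>b\<bar>"

lemma orl_M_taylor: "orl_M (a+b) \<le> orl_M a + orl_dM a * b + taylor_maj b"
proof -
  have "orl_M (a+b) - orl_M a - orl_dM a * b \<le> 12 * b\<^sup>2"
    using orl_M_taylor_square[of a b] zero_le_power2[of b] by linarith
  moreover have "orl_M (a+b) - orl_M a \<le> 6 * \<bar>b\<bar>" using orl_M_lipschitz[of "a+b" a] by simp
  moreover have "\<bar>orl_dM a * b\<bar> \<le> 6 * \<bar>b\<bar>"
    using orl_dM_bound[of a] by (simp add: abs_mult mult_right_mono)
  ultimately show ?thesis unfolding taylor_maj_def by (simp add: min_def abs_le_iff)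
qed

lemma taylor_maj_nonneg: "0 \<le> taylor_maj b"
  by (simp add: taylor_maj_def)

lemma taylor_maj_le_linear: "taylor_maj b \<le> 12 * \<bar>b\<bar>"
  by (simp add: taylor_maj_def)

lemma taylor_maj_borel[measurable]: "taylor_maj \<in> borel_measurable borel"
  unfolding taylor_maj_def by (intro borel_measurable_continuous_onI continuous_intros)

lemma taylor_maj_mono: assumes "\<bar>a\<bar> \<le> \<bar>b\<bar>" shows "taylor_maj a \<le> taylor_maj b"
proof -
  have "a\<^sup>2 \<le> b\<^sup>2" using assms by (metis abs_ge_zero power2_abs power_mono)
  then show ?thesis using assms unfolding taylor_maj_def by (simp add: min_def)
qed

lemma taylor_maj_scale: assumes "1 \<le> c" shows "taylor_maj (c * b) \<le> c\<^sup>2 * taylor_maj b"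
proof (cases "b\<^sup>2 \<le> \<bar>b\<bar>")
  case True
  have "min ((c*b)\<^sup>2) \<bar>c*b\<bar> \<le> c\<^sup>2 * min (b\<^sup>2) \<bar>b\<bar>"
    using True by (simp add: min_def power_mult_distrib)
  then show ?thesis unfolding taylor_maj_def by simp
next
  case False
  have "min ((c*b)\<^sup>2) \<bar>c*b\<bar> \<le> c * \<bar>b\<bar>" using assms by (simp add: abs_mult)
  also have "\<dots> \<le> c\<^sup>2 * min (b\<^sup>2) \<bar>b\<bar>"
    using assms False by (simp add: mult_right_mono power2_eq_square min_def)
  finally show ?thesis unfolding taylor_maj_def by simp
qed

text \<open>\<open>Q\<close> is subadditive up to a constant, which controls the remainder of a two-term increment.\<close>
lemma taylor_maj_sum_bound:
  assumes "\<bar>k\<bar> \<le> 2 * \<bar>u\<bar> + 2 * \<bar>v\<bar>"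
  shows "taylor_maj k \<le> 16 * (taylor_maj u + taylor_maj v)"
proof -
  define m where "m = max \<bar>u\<bar> \<bar>v\<bar>"
  have "\<bar>k\<bar> \<le> \<bar>4 * m\<bar>" using assms unfolding m_def by auto
  then have "taylor_maj k \<le> taylor_maj (4 * m)" by (rule taylor_maj_mono)
  also have "\<dots> \<le> 4\<^sup>2 * taylor_maj m" by (rule taylor_maj_scale) simp
  also have "taylor_maj m \<le> taylor_maj u + taylor_maj v"
    unfolding m_def taylor_maj_def by (auto simp: max_def)
  finally show ?thesis by (simp add: algebra_simps)
qed

text \<open>The Orlicz modular \<open>I(f) = \<integral> M(f) d\<mu>\<close>; the Luxemburg norm is its Minkowski functional.\<close>
definition orl_modular :: "'a measure \<Rightarrow> ('a \<Rightarrow> real) \<Rightarrow> real" where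
  "orl_modular mu f = (\<integral>w. orl_M (f w) \<partial>mu)"

lemma integrable_comp_linear_growth:
  fixes f :: "'a \<Rightarrow> real" and h :: "real \<Rightarrow> real"
  assumes "integrable mu f" "h \<in> borel_measurable borel" "\<And>t. \<bar>h t\<bar> \<le> c * \<bar>t\<bar>"
  shows "integrable mu (\<lambda>w. h (f w))"
proof (rule Bochner_Integration.integrable_bound[where f="\<lambda>w. c * f w"])
  show "integrable mu (\<lambda>w. c * f w)" using assms(1) by simp
  show "(\<lambda>w. h (f w)) \<in> borel_measurable mu" using assms(1,2) by measurable
  have "\<bar>h t\<bar> \<le> \<bar>c\<bar> * \<bar>t\<bar>" for t
    using assms(3)[of t] abs_ge_self[of c] mult_right_mono[of c "\<bar>c\<bar>" "\<bar>t\<bar>"] by linarith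
  then show "AE w in mu. norm (h (f w)) \<le> norm (c * f w)"
    by (simp add: abs_mult)
qed

lemma integrable_orl_M: "integrable mu f \<Longrightarrow> integrable mu (\<lambda>w. orl_M (f w))"
  by (rule integrable_comp_linear_growth[where c=6]) (use orl_M_le_linear orl_M_nonneg in auto)

lemma integrable_taylor_maj: "integrable mu f \<Longrightarrow> integrable mu (\<lambda>w. taylor_maj (f w))"
  by (rule integrable_comp_linear_growth[where c=12])
     (use taylor_maj_le_linear taylor_maj_nonneg in auto)

lemma integrable_orl_dM_mult:
  assumes "integrable mu f" "g \<in> borel_measurable mu"
  shows "integrable mu (\<lambda>w. orl_dM (g w) * f w)"
proof (rule Bochner_Integration.integrable_bound[where f="\<lambda>w. 6 * f w"])
  show "integrable mu (\<lambda>w. 6 * f w)" using assms by simp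
  show "(\<lambda>w. orl_dM (g w) * f w) \<in> borel_measurable mu" using assms by measurable
  show "AE w in mu. norm (orl_dM (g w) * f w) \<le> norm (6 * f w)"
    using orl_dM_bound by (auto simp: abs_mult intro!: mult_right_mono)
qed

lemma lux_norm_eq_modular:
  assumes "integrable mu f"
  shows "lux_norm mu f = Inf {l. 0 < l \<and> orl_modular mu (\<lambda>w. f w / l) \<le> 1}"
proof -
  have "(\<integral>\<^sup>+ x. ennreal (orl_M (f x / l)) \<partial>mu) = ennreal (orl_modular mu (\<lambda>w. f w / l))" for l
    unfolding orl_modular_def
    by (rule nn_integral_eq_integral)
       (use assms integrable_orl_M[of mu "\<lambda>w. f w / l"] orl_M_nonneg in auto)
  then show ?thesis unfolding lux_norm_def by simp
qed

lemma lux_norm_le: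
  assumes "integrable mu f" "0 < l" "orl_modular mu (\<lambda>w. f w / l) \<le> 1"
  shows "lux_norm mu f \<le> l"
  unfolding lux_norm_eq_modular[OF assms(1)]
  by (rule cInf_lower) (use assms in \<open>auto intro!: bdd_belowI[where m=0]\<close>)

lemma orl_modular_le_L1: "integrable mu f \<Longrightarrow> orl_modular mu f \<le> 6 * L1_norm mu f"
  unfolding orl_modular_def L1_norm_def
  by (subst integral_mult_right_zero[symmetric], rule integral_mono)
     (auto intro: integrable_orl_M orl_M_le_linear)

lemma orl_modular_lipschitz:
  assumes "integrable mu f" "integrable mu g"
  shows "orl_modular mu f - orl_modular mu g \<le> 6 * L1_norm mu (\<lambda>w. f w - g w)"
proof -
  have "orl_modular mu f - orl_modular mu g = (\<integral>w. orl_M (f w) - orl_M (g w) \<partial>mu)"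
    unfolding orl_modular_def using assms by (simp add: integrable_orl_M)
  also have "\<dots> \<le> (\<integral>w. 6 * \<bar>f w - g w\<bar> \<partial>mu)"
    by (rule integral_mono)
       (use assms orl_M_lipschitz abs_le_iff in \<open>auto intro: integrable_orl_M\<close>)
  finally show ?thesis unfolding L1_norm_def by simp
qed

lemma orl_modular_mono_scale:
  assumes "integrable mu f" "0 < l" "l \<le> l'"
  shows "orl_modular mu (\<lambda>w. f w / l') \<le> orl_modular mu (\<lambda>w. f w / l)"
  unfolding orl_modular_def
proof (rule integral_mono)
  show "integrable mu (\<lambda>w. orl_M (f w / l'))" "integrable mu (\<lambda>w. orl_M (f w / l))"
    using assms by (auto intro!: integrable_orl_M)
  show "orl_M (f w / l') \<le> orl_M (f w / l)" for w
    using assms by (auto intro!: orl_M_mono divide_left_mono)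
qed

lemma orl_modular_scaled_le_one:
  assumes f: "integrable mu f" and l: "lux_norm mu f < l"
  shows "orl_modular mu (\<lambda>w. f w / l) \<le> 1"
proof -
  define S where "S = {l. 0 < l \<and> orl_modular mu (\<lambda>w. f w / l) \<le> 1}"
  define l0 where "l0 = max 1 (6 * L1_norm mu f)"
  have "orl_modular mu (\<lambda>w. f w / l0) \<le> 6 * L1_norm mu f / l0"
    using orl_modular_le_L1[of mu "\<lambda>w. f w / l0"] f unfolding L1_norm_def l0_def
    by simp
  also have "\<dots> \<le> 1" unfolding l0_def by (simp add: field_simps)
  finally have "l0 \<in> S" unfolding S_def l0_def by simp
  moreover have "bdd_below S" unfolding S_def by (auto intro!: bdd_belowI[where m=0])
  moreover have "Inf S < l" using l unfolding S_def lux_norm_eq_modular[OF f] .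
  ultimately obtain l' where "l' \<in> S" "l' < l" using cInf_less_iff by blast
  then show ?thesis
    using orl_modular_mono_scale[OF f, of l' l] unfolding S_def by auto
qed

lemma orl_modular_le_one:
  assumes f: "integrable mu f" and n: "lux_norm mu f \<le> 1"
  shows "orl_modular mu f \<le> 1"
proof (rule field_le_epsilon)
  fix e :: real assume e: "0 < e"
  define L where "L = L1_norm mu f"
  have L: "0 \<le> L" unfolding L_def L1_norm_def by simp
  define l where "l = 1 + e / (6 * L + 1)"
  have l: "1 < l" unfolding l_def using e L by simp
  have "orl_modular mu f - orl_modular mu (\<lambda>w. f w / l) \<le> 6 * L1_norm mu (\<lambda>w. f w - f w / l)"
    using f by (intro orl_modular_lipschitz) auto
  also have "L1_norm mu (\<lambda>w. f w - f w / l) = (1 - 1/l) * L"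
  proof -
    have "\<bar>f w - f w / l\<bar> = (1 - 1/l) * \<bar>f w\<bar>" for w
    proof -
      have "f w - f w / l = (1 - 1/l) * f w" using l by (simp add: field_simps)
      then show ?thesis using l by (simp add: abs_mult)
    qed
    then show ?thesis unfolding L_def L1_norm_def by simp
  qed
  also have "6 * ((1 - 1/l) * L) \<le> 6 * ((l - 1) * L)"
  proof -
    have "l * 2 \<le> 1 + l * l" using zero_le_square[of "l - 1"] by (simp add: algebra_simps)
    then have "1 - 1/l \<le> l - 1" using l by (simp add: field_simps)
    then show ?thesis using L by (intro mult_left_mono mult_right_mono) auto
  qed
  also have "6 * ((l - 1) * L) \<le> e"
    using e L unfolding l_def by (simp add: field_simps)
  finally show "orl_modular mu f \<le> 1 + e"
    using orl_modular_scaled_le_one[OF f, of l] n l by simp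
qed

text \<open>Conversely, by the \<open>\<Delta>\<^sub>2\<close>-condition a function of norm at least 1 has modular at least 1/48.\<close>
lemma orl_modular_ge:
  assumes f: "integrable mu f" and n: "1 \<le> lux_norm mu f"
  shows "1/48 \<le> orl_modular mu f"
proof (rule ccontr)
  assume small: "\<not> 1/48 \<le> orl_modular mu f"
  have "orl_modular mu (\<lambda>w. f w / (1/2)) \<le> 48 * orl_modular mu f"
    unfolding orl_modular_def
    by (subst integral_mult_right_zero[symmetric], rule integral_mono)
       (use f orl_M_double in \<open>auto intro: integrable_orl_M simp: mult.commute\<close>)
  then have "lux_norm mu f \<le> 1/2"
    using small by (intro lux_norm_le f) auto
  then show False using n by simp
qed

text \<open>On a probability space the modular controls the \<open>L\<^sup>1\<close>-norm: \<open>\<parallel>f\<parallel>\<^sub>1 \<le> (I(f) + 1)/2\<close>.\<close>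
lemma L1_norm_le_one:
  assumes "prob_space mu" and f: "integrable mu f" and I: "orl_modular mu f \<le> 1"
  shows "L1_norm mu f \<le> 1"
proof -
  interpret prob_space mu by fact
  have "(\<integral>w. \<bar>f w\<bar> \<partial>mu) \<le> (\<integral>w. (orl_M (f w) + 1) / 2 \<partial>mu)"
  proof (rule integral_mono)
    show "integrable mu (\<lambda>w. (orl_M (f w) + 1) / 2)" using f by (simp add: integrable_orl_M)
    show "\<bar>f w\<bar> \<le> (orl_M (f w) + 1) / 2" for w using orl_M_ge_linear[of "f w"] by simp
  qed (use f in simp)
  also have "\<dots> = (orl_modular mu f + 1) / 2"
    unfolding orl_modular_def using f by (simp add: integrable_orl_M prob_space)
  finally show ?thesis unfolding L1_norm_def using I by simp
qed

lemma orl_modular_taylor: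
  assumes x: "integrable mu x" and k: "integrable mu k"
  shows "orl_modular mu (\<lambda>w. x w + k w)
           \<le> orl_modular mu x + (\<integral>w. orl_dM (x w) * k w \<partial>mu) + (\<integral>w. taylor_maj (k w) \<partial>mu)"
proof -
  have "orl_modular mu (\<lambda>w. x w + k w)
          \<le> (\<integral>w. orl_M (x w) + orl_dM (x w) * k w + taylor_maj (k w) \<partial>mu)"
    unfolding orl_modular_def using x k
    by (intro integral_mono orl_M_taylor)
       (auto intro!: Bochner_Integration.integrable_add integrable_orl_M integrable_orl_dM_mult
          integrable_taylor_maj)
  also have "\<dots> = orl_modular mu x + (\<integral>w. orl_dM (x w) * k w \<partial>mu) + (\<integral>w. taylor_maj (k w) \<partial>mu)"
    unfolding orl_modular_def using x k
    by (simp add: integrable_orl_M integrable_orl_dM_mult integrable_taylor_maj)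
  finally show ?thesis .
qed

lemma orl_modular_le_pairing:
  "integrable mu x \<Longrightarrow> orl_modular mu x \<le> (\<integral>w. orl_dM (x w) * x w \<partial>mu)"
  unfolding orl_modular_def
  by (rule integral_mono) (auto intro!: integrable_orl_M integrable_orl_dM_mult orl_M_le_dM)

lemma pairing_bound:
  assumes x: "integrable mu x" and y: "integrable mu y" and "L1_norm mu y \<le> 1"
  shows "\<bar>\<integral>w. orl_dM (x w) * y w \<partial>mu\<bar> \<le> 6"
proof -
  have "\<bar>\<integral>w. orl_dM (x w) * y w \<partial>mu\<bar> \<le> (\<integral>w. 6 * \<bar>y w\<bar> \<partial>mu)"
  proof (rule order_trans[OF integral_abs_bound integral_mono])
    show "integrable mu (\<lambda>w. \<bar>orl_dM (x w) * y w\<bar>)"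
      using x y by (intro integrable_abs integrable_orl_dM_mult) auto
    show "\<bar>orl_dM (x w) * y w\<bar> \<le> 6 * \<bar>y w\<bar>" for w
      using orl_dM_bound[of "x w"] by (simp add: abs_mult mult_right_mono)
  qed (use y in simp)
  then show ?thesis using assms(3) unfolding L1_norm_def by simp
qed

lemma integral_taylor_maj_combination:
  assumes x: "integrable mu x" and y: "integrable mu y"
    and "\<bar>c\<bar> \<le> \<tau>" "\<bar>eps\<bar> \<le> e" "1/2 \<le> lam"
  shows "(\<integral>w. taylor_maj ((c * y w - eps * x w) / lam) \<partial>mu)
           \<le> 16 * ((\<integral>w. taylor_maj (\<tau> * y w) \<partial>mu) + (\<integral>w. taylor_maj (e * x w) \<partial>mu))"
proof -
  have pointwise: "taylor_maj ((c * y w - eps * x w) / lam)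
      \<le> 16 * (taylor_maj (\<tau> * y w) + taylor_maj (e * x w))" for w
  proof (rule taylor_maj_sum_bound)
    have "\<bar>c * y w - eps * x w\<bar> \<le> \<tau> * \<bar>y w\<bar> + e * \<bar>x w\<bar>"
      using assms(3,4) abs_triangle_ineq4[of "c * y w" "eps * x w"]
        mult_right_mono[of "\<bar>c\<bar>" \<tau> "\<bar>y w\<bar>"] mult_right_mono[of "\<bar>eps\<bar>" e "\<bar>x w\<bar>"]
      by (simp add: abs_mult)
    moreover have "\<bar>c * y w - eps * x w\<bar> / lam \<le> 2 * \<bar>c * y w - eps * x w\<bar>"
      using assms(5) mult_right_mono[of 1 "2*lam" "\<bar>c * y w - eps * x w\<bar>"]
      by (simp add: field_simps)
    ultimately show "\<bar>(c * y w - eps * x w) / lam\<bar> \<le> 2 * \<bar>\<tau> * y w\<bar> + 2 * \<bar>e * x w\<bar>"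
      using assms(3-5) by (simp add: abs_mult)
  qed
  have "(\<integral>w. taylor_maj ((c * y w - eps * x w) / lam) \<partial>mu)
      \<le> (\<integral>w. 16 * (taylor_maj (\<tau> * y w) + taylor_maj (e * x w)) \<partial>mu)"
  proof (rule integral_mono)
    show "integrable mu (\<lambda>w. 16 * (taylor_maj (\<tau> * y w) + taylor_maj (e * x w)))"
      using x y by (intro integrable_mult_right Bochner_Integration.integrable_add integrable_taylor_maj) auto
  qed (use x y pointwise in \<open>auto intro: integrable_taylor_maj\<close>)
  also have "\<dots> = 16 * ((\<integral>w. taylor_maj (\<tau> * y w) \<partial>mu) + (\<integral>w. taylor_maj (e * x w) \<partial>mu))"
    using x y by (simp add: integrable_taylor_maj)
  finally show ?thesis .
qed

text \<open>It follows by expanding the modular of \<open>(x + c y)/(1 + \<epsilon>)\<close> around \<open>x\<close>.\<close>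
lemma lux_norm_perturbation:
  fixes mu :: "'a measure" and x y :: "'a \<Rightarrow> real" and \<tau> e c eps :: real
  defines "kap \<equiv> \<integral>w. orl_dM (x w) * x w \<partial>mu"
    and "S \<equiv> (\<integral>w. taylor_maj (\<tau> * y w) \<partial>mu) + (\<integral>w. taylor_maj (e * x w) \<partial>mu)"
  assumes x: "integrable mu x" and y: "integrable mu y"
    and Ix: "1/48 \<le> orl_modular mu x" "orl_modular mu x \<le> 1"
    and c: "\<bar>c\<bar> \<le> \<tau>" and eps_eq: "eps * kap = c * (\<integral>w. orl_dM (x w) * y w \<partial>mu) + 24 * S"
    and eps: "\<bar>eps\<bar> \<le> 1/2" "\<bar>eps\<bar> \<le> e"
  shows "lux_norm mu (\<lambda>w. x w + c * y w) \<le> 1 + eps"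
proof -
  have kap: "1/48 \<le> kap" using Ix orl_modular_le_pairing[OF x] unfolding kap_def by simp
  have S: "0 \<le> S" unfolding S_def by (simp add: integral_nonneg taylor_maj_nonneg)
  define lam where "lam = 1 + eps"
  have lam: "1/2 \<le> lam" "lam \<le> 3/2" using eps unfolding lam_def by auto
  define k where "k w = (c * y w - eps * x w) / lam" for w
  have k: "integrable mu k" unfolding k_def using x y by simp
  have "orl_modular mu (\<lambda>w. (x w + c * y w) / lam) = orl_modular mu (\<lambda>w. x w + k w)"
    unfolding k_def using lam by (simp add: field_simps lam_def)
  also have "\<dots> \<le> orl_modular mu x + (\<integral>w. orl_dM (x w) * k w \<partial>mu) + (\<integral>w. taylor_maj (k w) \<partial>mu)"
    by (rule orl_modular_taylor[OF x k])
  finally have expansion: "orl_modular mu (\<lambda>w. (x w + c * y w) / lam)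
      \<le> orl_modular mu x + (\<integral>w. orl_dM (x w) * k w \<partial>mu) + (\<integral>w. taylor_maj (k w) \<partial>mu)" .
  have "(\<lambda>w. orl_dM (x w) * k w) = (\<lambda>w. (c * (orl_dM (x w) * y w) - eps * (orl_dM (x w) * x w)) / lam)"
    unfolding k_def by (auto simp: field_simps)
  then have "(\<integral>w. orl_dM (x w) * k w \<partial>mu) = (c * (\<integral>w. orl_dM (x w) * y w \<partial>mu) - eps * kap) / lam"
    unfolding kap_def using x y by (simp add: integrable_orl_dM_mult)
  also have "\<dots> = - 24 * S / lam" using eps_eq by simp
  finally have first_order: "(\<integral>w. orl_dM (x w) * k w \<partial>mu) = - 24 * S / lam" .
  have remainder: "(\<integral>w. taylor_maj (k w) \<partial>mu) \<le> 16 * S"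
    unfolding k_def S_def by (rule integral_taylor_maj_combination[OF x y c eps(2) lam(1)])
  have "- 24 * S / lam + 16 * S \<le> 0"
    using S lam mult_left_mono[OF lam(2), of "16 * S"] by (simp add: field_simps)
  with expansion first_order remainder Ix
  have "orl_modular mu (\<lambda>w. (x w + c * y w) / lam) \<le> 1" by linarith
  then show ?thesis unfolding lam_def[symmetric] using x y lam by (intro lux_norm_le) auto
qed

lemma perturbation_size:
  fixes L kap S c \<tau> :: real
  assumes "\<bar>L\<bar> \<le> 6" "1/48 \<le> kap" "0 \<le> S" "S \<le> \<tau>" "\<bar>c\<bar> = \<tau>"
  shows "\<bar>(c * L + 24 * S) / kap\<bar> \<le> 1440 * \<tau>"
proof -
  have "\<bar>c * L\<bar> \<le> \<tau> * 6" using assms by (simp add: abs_mult mult_left_mono)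
  then have num: "\<bar>c * L + 24 * S\<bar> \<le> 30 * \<tau>" using assms by (simp add: abs_le_iff)
  have "\<bar>(c * L + 24 * S) / kap\<bar> = \<bar>c * L + 24 * S\<bar> / kap" using assms by simp
  also have "\<dots> \<le> (30 * \<tau>) / kap" using num assms by (intro divide_right_mono) auto
  also have "\<dots> \<le> (30 * \<tau>) / (1/48)" using num assms by (intro divide_left_mono) auto
  finally show ?thesis by simp
qed

lemma smoothness_pair_bound:
  fixes mu :: "'a measure" and x y :: "'a \<Rightarrow> real" and \<tau> :: real
  defines "S \<equiv> (\<integral>w. taylor_maj (\<tau> * y w) \<partial>mu) + (\<integral>w. taylor_maj ((1440 * \<tau>) * x w) \<partial>mu)"
  assumes P: "prob_space mu" and x: "integrable mu x" and y: "integrable mu y"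
    and nx: "lux_norm mu x = 1" and ny: "lux_norm mu y = 1"
    and \<tau>: "0 < \<tau>" "\<tau> \<le> 1/2880" and S_small: "S \<le> \<tau>"
  shows "(lux_norm mu (\<lambda>w. x w + \<tau> * y w) + lux_norm mu (\<lambda>w. x w - \<tau> * y w)) / 2 - 1 \<le> 1152 * S"
proof -
  define kap where "kap = (\<integral>w. orl_dM (x w) * x w \<partial>mu)"
  define L where "L = (\<integral>w. orl_dM (x w) * y w \<partial>mu)"
  define eps where "eps c = (c * L + 24 * S) / kap" for c
  have Ix: "1/48 \<le> orl_modular mu x" "orl_modular mu x \<le> 1"
    using orl_modular_ge[OF x] orl_modular_le_one[OF x] nx by auto
  have kap: "1/48 \<le> kap" using Ix orl_modular_le_pairing[OF x] unfolding kap_def by simp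
  have "L1_norm mu y \<le> 1" using L1_norm_le_one[OF P y] orl_modular_le_one[OF y] ny by simp
  then have L: "\<bar>L\<bar> \<le> 6" unfolding L_def by (rule pairing_bound[OF x y])
  have S: "0 \<le> S" unfolding S_def by (simp add: integral_nonneg taylor_maj_nonneg)
  have eps_small: "\<bar>eps c\<bar> \<le> 1/2" "\<bar>eps c\<bar> \<le> 1440 * \<tau>" if "\<bar>c\<bar> = \<tau>" for c
  proof -
    show "\<bar>eps c\<bar> \<le> 1440 * \<tau>" unfolding eps_def by (rule perturbation_size[OF L kap S S_small that])
    then show "\<bar>eps c\<bar> \<le> 1/2" using \<tau> by simp
  qed
  have "lux_norm mu (\<lambda>w. x w + c * y w) \<le> 1 + eps c" if "\<bar>c\<bar> = \<tau>" for c
  proof (rule lux_norm_perturbation[OF x y Ix _ _ eps_small[OF that]])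
    show "eps c * (\<integral>w. orl_dM (x w) * x w \<partial>mu) = c * (\<integral>w. orl_dM (x w) * y w \<partial>mu)
            + 24 * ((\<integral>w. taylor_maj (\<tau> * y w) \<partial>mu) + (\<integral>w. taylor_maj ((1440 * \<tau>) * x w) \<partial>mu))"
      using kap unfolding eps_def kap_def L_def S_def by simp
  qed (use that in simp)
  from this[of \<tau>] this[of "-\<tau>"] \<tau>
  have "(lux_norm mu (\<lambda>w. x w + \<tau> * y w) + lux_norm mu (\<lambda>w. x w - \<tau> * y w)) / 2 - 1
          \<le> (eps \<tau> + eps (-\<tau>)) / 2" by (simp add: field_simps)
  also have "\<dots> = 24 * S / kap" unfolding eps_def add_divide_distrib[symmetric] by (simp add: algebra_simps)
  also have "\<dots> \<le> 24 * S / (1/48)" using kap S by (intro divide_left_mono) auto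
  finally show ?thesis by simp
qed

lemma rho_mod_le_remainder:
  assumes P: "prob_space mu" and Xint: "X \<subseteq> {f. integrable mu f}"
    and \<Phi>: "\<And>g s. g \<in> X \<Longrightarrow> L1_norm mu g \<le> 1 \<Longrightarrow> 0 < s \<Longrightarrow> s \<le> s0
               \<Longrightarrow> (\<integral>w. taylor_maj (s * g w) \<partial>mu) \<le> \<Phi> s"
    and \<tau>: "0 < \<tau>" "1440 * \<tau> \<le> s0" "\<tau> \<le> 1/2880" and small: "\<Phi> \<tau> + \<Phi> (1440 * \<tau>) \<le> \<tau>"
  shows "rho_mod mu X \<tau> \<le> ereal (1152 * (\<Phi> \<tau> + \<Phi> (1440 * \<tau>)))"
  unfolding rho_mod_def
proof (rule Sup_least, safe)
  fix x y assume xX: "x \<in> X" and yX: "y \<in> X" and nx: "lux_norm mu x = 1" and ny: "lux_norm mu y = 1"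
  have x: "integrable mu x" and y: "integrable mu y" using xX yX Xint by auto
  have "L1_norm mu x \<le> 1" "L1_norm mu y \<le> 1"
    using L1_norm_le_one[OF P x orl_modular_le_one[OF x]] L1_norm_le_one[OF P y orl_modular_le_one[OF y]]
      nx ny by auto
  then have "(\<integral>w. taylor_maj (\<tau> * y w) \<partial>mu) + (\<integral>w. taylor_maj ((1440 * \<tau>) * x w) \<partial>mu)
               \<le> \<Phi> \<tau> + \<Phi> (1440 * \<tau>)"
    using \<Phi>[OF yX, of \<tau>] \<Phi>[OF xX, of "1440 * \<tau>"] \<tau> by (intro add_mono) auto
  with smoothness_pair_bound[OF P x y nx ny \<tau>(1,3)] small
  show "ereal ((lux_norm mu (\<lambda>w. x w + \<tau> * y w) + lux_norm mu (\<lambda>w. x w - \<tau> * y w)) / 2 - 1)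
          \<le> ereal (1152 * (\<Phi> \<tau> + \<Phi> (1440 * \<tau>)))" by simp
qed

definition tail_int :: "'a measure \<Rightarrow> ('a \<Rightarrow> real) \<Rightarrow> real \<Rightarrow> real" where
  "tail_int mu g t = (\<integral>w. max (\<bar>g w\<bar> - t) 0 \<partial>mu)"

lemma integrable_tail:
  fixes g :: "'a \<Rightarrow> real"
  assumes "integrable mu g" "0 \<le> t"
  shows "integrable mu (\<lambda>w. max (\<bar>g w\<bar> - t) 0)"
  by (rule Bochner_Integration.integrable_bound[where f="\<lambda>w. \<bar>g w\<bar>"]) (use assms in auto)

lemma tail_int_mono:
  assumes "integrable mu g" "integrable mu h" "0 \<le> t" "\<And>w. \<bar>g w\<bar> \<le> \<bar>h w\<bar>"
  shows "tail_int mu g t \<le> tail_int mu h t"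
  unfolding tail_int_def
proof (rule integral_mono)
  show "max (\<bar>g w\<bar> - t) 0 \<le> max (\<bar>h w\<bar> - t) 0" for w
    using assms(4)[of w] by (simp add: max_def)
qed (use assms in \<open>auto intro: integrable_tail\<close>)

text \<open>Layer-cake formula: \<open>\<integral>\<^sub>t\<^sup>\<infinity> F\<^sub>g(u) du = H\<^sub>g(t)\<close>, by Tonelli's theorem.\<close>
lemma distribution_tail_eq:
  fixes f :: "'a \<Rightarrow> real"
  assumes "finite_measure mu" and f[measurable]: "f \<in> borel_measurable mu"
  shows "(\<integral>\<^sup>+ u. indicator {t..} u * ennreal (distr_fun mu f u) \<partial>lborel)
       = (\<integral>\<^sup>+ w. ennreal (max (\<bar>f w\<bar> - t) 0) \<partial>mu)"
proof -
  interpret finite_measure mu by fact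
  have psf: "pair_sigma_finite mu lborel"
    unfolding pair_sigma_finite_def
    by (simp add: sigma_finite_measure_axioms lborel.sigma_finite_measure_axioms)
  have layer: "indicator {t..} u * ennreal (distr_fun mu f u)
      = (\<integral>\<^sup>+ w. (if t \<le> u \<and> u < \<bar>f w\<bar> then 1 else 0) \<partial>mu)" for u
  proof -
    have "indicator {t..} u * ennreal (distr_fun mu f u)
        = (\<integral>\<^sup>+ w. indicator {t..} u * indicator {w \<in> space mu. u < \<bar>f w\<bar>} w \<partial>mu)"
      unfolding distr_fun_def
      by (simp add: emeasure_eq_measure[symmetric] nn_integral_cmult)
    also have "\<dots> = (\<integral>\<^sup>+ w. (if t \<le> u \<and> u < \<bar>f w\<bar> then 1 else 0) \<partial>mu)"
      by (intro nn_integral_cong) (auto simp: indicator_def)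
    finally show ?thesis .
  qed
  have "(\<integral>\<^sup>+ u. indicator {t..} u * ennreal (distr_fun mu f u) \<partial>lborel)
      = (\<integral>\<^sup>+ w. \<integral>\<^sup>+ u. (if t \<le> u \<and> u < \<bar>f w\<bar> then 1 else 0) \<partial>lborel \<partial>mu)"
    unfolding layer by (rule pair_sigma_finite.Fubini'[OF psf]) measurable
  also have "\<dots> = (\<integral>\<^sup>+ w. \<integral>\<^sup>+ u. indicator {t..<\<bar>f w\<bar>} u \<partial>lborel \<partial>mu)"
    by (intro nn_integral_cong) (auto simp: indicator_def)
  also have "\<dots> = (\<integral>\<^sup>+ w. ennreal (max (\<bar>f w\<bar> - t) 0) \<partial>mu)"
    by (intro nn_integral_cong) (auto simp: max_def)
  finally show ?thesis .
qed

text \<open>\<open>G\<^sub>X(t)\<close> dominates the tail integral on the whole \<open>L\<^sup>1\<close>-unit ball of \<open>X\<close>: normalise \<open>g\<close>,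
  apply the layer-cake formula, and note that shrinking \<open>g\<close> only decreases \<open>H\<^sub>g\<close>.\<close>
lemma tail_int_le_G_fun:
  assumes fin: "finite_measure mu" and X: "closed_L1_subspace mu X"
    and g: "g \<in> X" "L1_norm mu g \<le> 1" and t: "0 \<le> t"
  shows "ennreal (tail_int mu g t) \<le> G_fun mu X t"
proof -
  have Xint: "\<And>f. f \<in> X \<Longrightarrow> integrable mu f" and Xscale: "\<And>f c. f \<in> X \<Longrightarrow> (\<lambda>w. c * f w) \<in> X"
    using X unfolding closed_L1_subspace_def by auto
  define a where "a = L1_norm mu g"
  have "0 \<le> a" unfolding a_def L1_norm_def by simp
  show ?thesis
  proof (cases "a = 0")
    case True
    have "tail_int mu g t \<le> L1_norm mu g"
      unfolding tail_int_def L1_norm_def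
      by (rule integral_mono) (use g t Xint in \<open>auto intro: integrable_tail\<close>)
    then have "ennreal (tail_int mu g t) = 0" using True unfolding a_def by (simp add: ennreal_neg)
    then show ?thesis by simp
  next
    case False
    then have a: "0 < a" "a \<le> 1" using \<open>0 \<le> a\<close> g unfolding a_def by auto
    define g1 where "g1 w = (1/a) * g w" for w
    have "g1 \<in> X" unfolding g1_def[abs_def] by (rule Xscale[OF g(1)])
    then have g1: "g1 \<in> X" "integrable mu g1" using Xint by auto
    have "tail_int mu g t \<le> tail_int mu g1 t"
    proof (rule tail_int_mono)
      show "\<bar>g w\<bar> \<le> \<bar>g1 w\<bar>" for w
        using a mult_left_le_one_le[of "\<bar>g w\<bar>" a] by (simp add: g1_def abs_mult field_simps)
    qed (use g1 g t Xint in auto)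
    then have "ennreal (tail_int mu g t) \<le> (\<integral>\<^sup>+ w. ennreal (max (\<bar>g1 w\<bar> - t) 0) \<partial>mu)"
      unfolding tail_int_def
      by (subst nn_integral_eq_integral) (use g1 t integrable_tail in \<open>auto intro: ennreal_leI\<close>)
    also have "\<dots> = (\<integral>\<^sup>+ u. indicator {t..} u * ennreal (distr_fun mu g1 u) \<partial>lborel)"
      using distribution_tail_eq[OF fin] g1 by simp
    also have "\<dots> \<le> G_fun mu X t"
    proof (unfold G_fun_def, rule SUP_upper)
      have "L1_norm mu g1 = 1" using a by (simp add: g1_def L1_norm_def abs_mult a_def)
      then show "g1 \<in> {f \<in> X. L1_norm mu f = 1}" using g1 by simp
    qed
    finally show ?thesis .
  qed
qed

lemma tail_decay:
  assumes fin: "finite_measure mu" and X: "closed_L1_subspace mu X"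
    and G: "\<exists>C. eventually (\<lambda>t. G_fun mu X t \<le> ennreal (C / t powr (p - 1))) at_top"
  obtains t1 K where "1 \<le> t1" "0 \<le> K"
    "\<And>g t. g \<in> X \<Longrightarrow> L1_norm mu g \<le> 1 \<Longrightarrow> t1 \<le> t \<Longrightarrow> tail_int mu g t \<le> K * t powr (1 - p)"
proof -
  obtain C t0 where C: "\<And>t. t \<ge> t0 \<Longrightarrow> G_fun mu X t \<le> ennreal (C / t powr (p - 1))"
    using G unfolding eventually_at_top_linorder by blast
  have "tail_int mu g t \<le> \<bar>C\<bar> * t powr (1 - p)"
    if g: "g \<in> X" "L1_norm mu g \<le> 1" and t: "max t0 1 \<le> t" for g t
  proof -
    have "ennreal (tail_int mu g t) \<le> ennreal (C / t powr (p - 1))"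
      using tail_int_le_G_fun[OF fin X g, of t] C[of t] t by auto
    moreover have "0 \<le> tail_int mu g t" unfolding tail_int_def by (simp add: integral_nonneg)
    moreover have "C / t powr (p - 1) \<le> \<bar>C\<bar> / t powr (p - 1)" by (intro divide_right_mono) auto
    ultimately have "tail_int mu g t \<le> \<bar>C\<bar> / t powr (p - 1)"
      by (cases "0 \<le> C / t powr (p - 1)") (auto simp: ennreal_neg)
    also have "\<dots> = \<bar>C\<bar> * t powr (1 - p)" using t by (simp add: powr_diff divide_inverse)
    finally show ?thesis .
  qed
  then show thesis by (intro that[of "max t0 1" "\<bar>C\<bar>"]) auto
qed

lemma dyadic_exists:
  fixes a b :: real
  assumes a: "0 < a" and ab: "a \<le> b"
  obtains n where "2^n * a \<le> b" "b < 2^(Suc n) * a"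
proof -
  obtain m where "b / a < 2^m" using real_arch_pow[of 2 "b/a"] by auto
  then have m: "b < 2^m * a" using a by (simp add: field_simps)
  define m0 where "m0 = (LEAST m. b < 2^m * a)"
  have m0: "b < 2^m0 * a" unfolding m0_def by (rule LeastI[of _ m]) (rule m)
  then obtain n where n: "m0 = Suc n" using ab by (cases m0) auto
  have "\<not> b < 2^n * a" using not_less_Least[of n "\<lambda>m. b < 2^m * a"] n unfolding m0_def by simp
  then show thesis using m0 n by (intro that) auto
qed

lemma truncated_square_dyadic:
  fixes v t1 T :: real and N :: nat
  assumes v: "0 \<le> v" and t1: "0 < t1" and N: "2^N * t1 \<le> T" "T < 2^(Suc N) * t1"
    and T: "2 * t1 \<le> T"
  shows "min (v\<^sup>2) (T * v) \<le> 2 * t1 * v + (\<Sum>j<N. 8 * (2^j * t1) * max (v - 2^j * t1) 0)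
           + 2 * T * max (v - T/2) 0"
proof -
  define S where "S = (\<Sum>j<N. 8 * (2^j * t1) * max (v - 2^j * t1) 0)"
  have S: "0 \<le> S" unfolding S_def using t1 by (intro sum_nonneg) simp
  have R: "0 \<le> 2 * T * max (v - T/2) 0" and L: "0 \<le> 2 * t1 * v" using T t1 v by auto
  consider "v < 2 * t1" | "T < v" | "2 * t1 \<le> v \<and> v \<le> T" by linarith
  then have "min (v\<^sup>2) (T * v) \<le> 2 * t1 * v + S + 2 * T * max (v - T/2) 0"
  proof cases
    case 1
    then have "v\<^sup>2 \<le> 2 * t1 * v" using v by (simp add: power2_eq_square mult_right_mono)
    then show ?thesis using S R by linarith
  next
    case 2
    then have "T * v \<le> 2 * T * max (v - T/2) 0"
      using T t1 mult_left_mono[of T v T] by (simp add: algebra_simps)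
    then show ?thesis using S L by linarith
  next
    case 3
    have "t1 \<le> v" using 3 t1 by simp
    then obtain n where n: "2^n * t1 \<le> v" "v < 2^(Suc n) * t1"
      by (rule dyadic_exists[OF t1])
    then obtain j where j: "n = Suc j" using 3 by (cases n) auto
    have "(2::real)^n * t1 < 2^(Suc N) * t1" using n 3 N by linarith
    then have jN: "j < N" using t1 j by simp
    define r where "r = 2^j * t1"
    have r: "0 < r" "2 * r \<le> v" "v < 4 * r" using n t1 unfolding r_def j by auto
    have "v\<^sup>2 \<le> (4 * r) * v" using r v by (simp add: power2_eq_square mult_right_mono)
    also have "\<dots> \<le> 8 * r * (v - r)" using r by (simp add: algebra_simps mult_left_mono)
    also have "\<dots> = 8 * (2^j * t1) * max (v - 2^j * t1) 0" using r unfolding r_def by simp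
    also have "\<dots> \<le> S" unfolding S_def
      by (rule member_le_sum[of j "{..<N}" "\<lambda>j. 8 * (2^j * t1) * max (v - 2^j * t1) 0"])
         (use jN t1 in auto)
    finally show ?thesis using L R by linarith
  qed
  then show ?thesis unfolding S_def .
qed

lemma integral_truncated_square_dyadic:
  fixes g :: "'a \<Rightarrow> real" and t1 T :: real and N :: nat
  assumes g: "integrable mu g" and t1: "0 < t1"
    and N: "2^N * t1 \<le> T" "T < 2^(Suc N) * t1" and T: "2 * t1 \<le> T"
  shows "(\<integral>w. min ((g w)\<^sup>2) (T * \<bar>g w\<bar>) \<partial>mu) \<le>
     2 * t1 * L1_norm mu g + (\<Sum>j<N. 8 * (2^j * t1) * tail_int mu g (2^j * t1)) + 2 * T * tail_int mu g (T/2)"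
proof -
  have tail: "integrable mu (\<lambda>w. max (\<bar>g w\<bar> - c) 0)" if "0 \<le> c" for c
    using integrable_tail[OF g that] .
  have "(\<integral>w. min ((g w)\<^sup>2) (T * \<bar>g w\<bar>) \<partial>mu) \<le>
     (\<integral>w. 2 * t1 * \<bar>g w\<bar> + (\<Sum>j<N. 8 * (2^j * t1) * max (\<bar>g w\<bar> - 2^j * t1) 0)
          + 2 * T * max (\<bar>g w\<bar> - T/2) 0 \<partial>mu)"
  proof (rule integral_mono)
    show "integrable mu (\<lambda>w. min ((g w)\<^sup>2) (T * \<bar>g w\<bar>))"
      by (rule Bochner_Integration.integrable_bound[where f="\<lambda>w. T * \<bar>g w\<bar>"])
         (use g t1 T in \<open>auto simp: abs_mult\<close>)
    show "integrable mu (\<lambda>w. 2 * t1 * \<bar>g w\<bar> + (\<Sum>j<N. 8 * (2^j * t1) * max (\<bar>g w\<bar> - 2^j * t1) 0)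
          + 2 * T * max (\<bar>g w\<bar> - T/2) 0)"
      using g t1 T tail by (intro Bochner_Integration.integrable_add Bochner_Integration.integrable_sum
          integrable_mult_right) auto
  qed (use truncated_square_dyadic[OF abs_ge_zero t1 N T] in simp)
  also have "\<dots> = 2 * t1 * L1_norm mu g + (\<Sum>j<N. 8 * (2^j * t1) * tail_int mu g (2^j * t1))
      + 2 * T * tail_int mu g (T/2)"
    unfolding L1_norm_def tail_int_def using g t1 T tail
    by (simp add: Bochner_Integration.integral_sum)
  finally show ?thesis .
qed

lemma integral_taylor_maj_dyadic:
  fixes g :: "'a \<Rightarrow> real"
  assumes g: "integrable mu g" and L1: "L1_norm mu g \<le> 1" and t1: "0 < t1" and K: "0 \<le> K"
    and decay: "\<And>t. t1 \<le> t \<Longrightarrow> tail_int mu g t \<le> K * t powr (1 - p)"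
    and s: "0 < s" "s \<le> 1 / (2 * t1)"
  obtains N where "2^N * t1 \<le> 1/s"
    "(\<integral>w. taylor_maj (s * g w) \<partial>mu) \<le>
       12 * s\<^sup>2 * (2 * t1 + 8 * K * (\<Sum>j<N. (2^j * t1) powr (2 - p)) + 4 * K * ((1/s)/2) powr (2 - p))"
proof -
  define T where "T = 1/s"
  have T: "2 * t1 \<le> T" unfolding T_def using s t1 by (simp add: field_simps)
  then obtain N where N: "2^N * t1 \<le> T" "T < 2^(Suc N) * t1"
    using dyadic_exists[OF t1, of T] t1 by auto
  have weighted: "r * tail_int mu g r \<le> K * r powr (2 - p)" if "t1 \<le> r" for r
  proof -
    have "r * r powr (1 - p) = r powr (2 - p)"
      using that t1 powr_add[of r 1 "1 - p"] by simp
    then have "r * (K * r powr (1 - p)) = K * r powr (2 - p)" by (metis mult.left_commute)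
    moreover have "r * tail_int mu g r \<le> r * (K * r powr (1 - p))"
      using decay[OF that] that t1 by (intro mult_left_mono) auto
    ultimately show ?thesis by linarith
  qed
  have "(\<Sum>j<N. 8 * (2^j * t1) * tail_int mu g (2^j * t1)) \<le> (\<Sum>j<N. 8 * (K * (2^j * t1) powr (2 - p)))"
  proof (rule sum_mono)
    fix j have "t1 \<le> 2^j * t1" using t1 by simp
    from weighted[OF this]
    show "8 * (2^j * t1) * tail_int mu g (2^j * t1) \<le> 8 * (K * (2^j * t1) powr (2 - p))" by simp
  qed
  moreover have "2 * T * tail_int mu g (T/2) \<le> 4 * (K * (T/2) powr (2 - p))"
    using weighted[of "T/2"] T by simp
  moreover have "2 * t1 * L1_norm mu g \<le> 2 * t1" using L1 t1 by simp
  ultimately have "(\<integral>w. min ((g w)\<^sup>2) (T * \<bar>g w\<bar>) \<partial>mu)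
      \<le> 2 * t1 + 8 * K * (\<Sum>j<N. (2^j * t1) powr (2 - p)) + 4 * K * (T/2) powr (2 - p)"
    using integral_truncated_square_dyadic[OF g t1 N T] by (simp add: sum_distrib_left mult.assoc)
  moreover have "taylor_maj (s * b) = 12 * s\<^sup>2 * min (b\<^sup>2) (T * \<bar>b\<bar>)" for b
    using s unfolding taylor_maj_def T_def
    by (simp add: min_mult_distrib_left power_mult_distrib abs_mult power2_eq_square mult_ac)
  ultimately have "(\<integral>w. taylor_maj (s * g w) \<partial>mu)
      \<le> 12 * s\<^sup>2 * (2 * t1 + 8 * K * (\<Sum>j<N. (2^j * t1) powr (2 - p)) + 4 * K * (T/2) powr (2 - p))"
    by (simp add: mult_left_mono)
  then show thesis using N unfolding T_def by (intro that) auto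
qed

lemma dyadic_powr: "0 < t1 \<Longrightarrow> ((2::real)^j * t1) powr a = (2 powr a)^j * t1 powr a"
  by (simp add: powr_mult powr_realpow[symmetric] powr_powr powr_power mult.commute)

text \<open>For a negative exponent the dyadic sum is dominated by a convergent geometric series.\<close>
lemma dyadic_powr_sum_neg:
  assumes "a < 0" "1 \<le> t1"
  shows "(\<Sum>j<N. ((2::real)^j * t1) powr a) \<le> 1 / (1 - 2 powr a)"
proof -
  define r where "r = (2::real) powr a"
  have r: "0 < r" "r < 1" unfolding r_def using assms by (auto intro!: powr_less_one)
  have "t1 powr a \<le> 1" using assms powr_mono[of a 0 t1] by simp
  then have "(\<Sum>j<N. (2^j * t1) powr a) \<le> (\<Sum>j<N. r^j)"
    using assms r unfolding r_def by (intro sum_mono) (simp add: dyadic_powr mult_left_le)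
  also have "\<dots> = (1 - r^N) / (1 - r)" using r by (simp add: sum_gp_strict)
  also have "\<dots> \<le> 1 / (1 - r)" using r by (intro divide_right_mono) auto
  finally show ?thesis unfolding r_def .
qed

lemma dyadic_powr_sum_pos:
  assumes "0 < a" "0 < t1"
  shows "(\<Sum>j<N. ((2::real)^j * t1) powr a) \<le> (2^N * t1) powr a / (2 powr a - 1)"
proof -
  define r where "r = (2::real) powr a"
  have r: "1 < r" unfolding r_def using assms by simp
  have "(2^j * t1) powr a = t1 powr a * r^j" for j
    unfolding r_def using dyadic_powr[OF assms(2)] by simp
  then have "(\<Sum>j<N. (2^j * t1) powr a) = t1 powr a * (\<Sum>j<N. r^j)"
    by (simp add: sum_distrib_left)
  also have "(\<Sum>j<N. r^j) = (r^N - 1) / (r - 1)" using r by (simp add: sum_gp_strict field_simps)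
  also have "t1 powr a * \<dots> \<le> t1 powr a * (r^N / (r - 1))"
    using r by (intro mult_left_mono divide_right_mono) auto
  also have "\<dots> = (2^N * t1) powr a / (r - 1)" unfolding r_def using assms by (simp add: dyadic_powr)
  finally show ?thesis unfolding r_def .
qed

lemma taylor_remainder_gt2:
  assumes t1: "1 \<le> t1" and K: "0 \<le> K" and p: "2 < p"
  obtains C where "0 \<le> C"
    "\<And>g s. integrable mu g \<Longrightarrow> L1_norm mu g \<le> 1 \<Longrightarrow> (\<And>t. t1 \<le> t \<Longrightarrow> tail_int mu g t \<le> K * t powr (1 - p))
       \<Longrightarrow> 0 < s \<Longrightarrow> s \<le> 1 / (2 * t1) \<Longrightarrow> (\<integral>w. taylor_maj (s * g w) \<partial>mu) \<le> C * s\<^sup>2"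
proof
  show "0 \<le> 12 * (2 * t1 + 8 * K / (1 - 2 powr (2 - p)) + 4 * K)"
  proof -
    have "2 powr (2 - p) < 1" using p by (auto intro!: powr_less_one)
    then show ?thesis using t1 K by simp
  qed
next
  fix g and s :: real
  assume g: "integrable mu g" "L1_norm mu g \<le> 1"
    and decay: "\<And>t. t1 \<le> t \<Longrightarrow> tail_int mu g t \<le> K * t powr (1 - p)" and s: "0 < s" "s \<le> 1 / (2 * t1)"
  obtain N where Q: "(\<integral>w. taylor_maj (s * g w) \<partial>mu) \<le>
       12 * s\<^sup>2 * (2 * t1 + 8 * K * (\<Sum>j<N. (2^j * t1) powr (2 - p)) + 4 * K * ((1/s)/2) powr (2 - p))"
    using integral_taylor_maj_dyadic[OF g _ K decay s] t1 by auto
  have "(\<Sum>j<N. (2^j * t1) powr (2 - p)) \<le> 1 / (1 - 2 powr (2 - p))"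
    using dyadic_powr_sum_neg[of "2 - p" t1] p t1 by simp
  moreover have "((1/s)/2) powr (2 - p) \<le> 1"
  proof -
    have "1/(2*t1) \<le> 1/2" using t1 by (simp add: field_simps)
    then have "1 \<le> (1/s)/2" using s by (simp add: field_simps)
    then show ?thesis using p s powr_mono[of "2 - p" 0 "(1/s)/2"] by simp
  qed
  ultimately have "2 * t1 + 8 * K * (\<Sum>j<N. (2^j * t1) powr (2 - p)) + 4 * K * ((1/s)/2) powr (2 - p)
      \<le> 2 * t1 + 8 * K * (1 / (1 - 2 powr (2 - p))) + 4 * K * 1"
    using K by (intro add_mono mult_left_mono order_refl) auto
  then have "12 * s\<^sup>2 * (2 * t1 + 8 * K * (\<Sum>j<N. (2^j * t1) powr (2 - p)) + 4 * K * ((1/s)/2) powr (2 - p))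
      \<le> 12 * s\<^sup>2 * (2 * t1 + 8 * K * (1 / (1 - 2 powr (2 - p))) + 4 * K * 1)"
    by (rule mult_left_mono) simp
  also have "\<dots> = 12 * (2 * t1 + 8 * K / (1 - 2 powr (2 - p)) + 4 * K) * s\<^sup>2" by simp
  finally show "(\<integral>w. taylor_maj (s * g w) \<partial>mu) \<le> 12 * (2 * t1 + 8 * K / (1 - 2 powr (2 - p)) + 4 * K) * s\<^sup>2"
    using Q by linarith
qed

lemma dyadic_bracket_pos:
  fixes a t1 K T :: real
  assumes a: "0 < a" and t1: "0 < t1" and K: "0 \<le> K" and N: "2^N * t1 \<le> T"
  shows "2 * t1 + 8 * K * (\<Sum>j<N. (2^j * t1) powr a) + 4 * K * (T/2) powr a
           \<le> 2 * t1 + (8 * K / (2 powr a - 1) + 4 * K) * T powr a"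
proof -
  have "0 < 2^N * t1" using t1 by simp
  then have T: "0 < T" using N by linarith
  have "(\<Sum>j<N. (2^j * t1) powr a) \<le> (2^N * t1) powr a / (2 powr a - 1)"
    by (rule dyadic_powr_sum_pos[OF a t1])
  also have "\<dots> \<le> T powr a / (2 powr a - 1)"
    using N a t1 by (intro divide_right_mono powr_mono2) (auto simp: less_imp_le)
  finally have "8 * K * (\<Sum>j<N. (2^j * t1) powr a) \<le> 8 * K * (T powr a / (2 powr a - 1))"
    using K by (intro mult_left_mono) auto
  moreover have "4 * K * (T/2) powr a \<le> 4 * K * T powr a"
    using K a T by (intro mult_left_mono powr_mono2) auto
  moreover have "(8 * K / (2 powr a - 1) + 4 * K) * T powr a
      = 8 * K * (T powr a / (2 powr a - 1)) + 4 * K * T powr a"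
    by (simp add: distrib_right)
  ultimately show ?thesis by linarith
qed

text \<open>Case \<open>1 < p < 2\<close>: \<open>\<integral> Q(s g) = O(s\<^sup>p)\<close>, using \<open>s\<^sup>2 (1/s)\<^sup>2\<^sup>-\<^sup>p = s\<^sup>p\<close> and \<open>s\<^sup>2 \<le> s\<^sup>p\<close>.\<close>
lemma taylor_remainder_lt2:
  assumes t1: "1 \<le> t1" and K: "0 \<le> K" and p: "1 < p" "p < 2"
  obtains C where "0 \<le> C"
    "\<And>g s. integrable mu g \<Longrightarrow> L1_norm mu g \<le> 1 \<Longrightarrow> (\<And>t. t1 \<le> t \<Longrightarrow> tail_int mu g t \<le> K * t powr (1 - p))
       \<Longrightarrow> 0 < s \<Longrightarrow> s \<le> 1 / (2 * t1) \<Longrightarrow> (\<integral>w. taylor_maj (s * g w) \<partial>mu) \<le> C * s powr p"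
proof
  define B where "B = 8 * K / (2 powr (2 - p) - 1) + 4 * K"
  have "1 < (2::real) powr (2 - p)" using p by simp
  then show "0 \<le> 24 * t1 + 12 * B" using t1 K unfolding B_def by simp
  fix g and s :: real
  assume g: "integrable mu g" "L1_norm mu g \<le> 1"
    and decay: "\<And>t. t1 \<le> t \<Longrightarrow> tail_int mu g t \<le> K * t powr (1 - p)" and s: "0 < s" "s \<le> 1 / (2 * t1)"
  obtain N where N: "2^N * t1 \<le> 1/s" and Q: "(\<integral>w. taylor_maj (s * g w) \<partial>mu) \<le>
       12 * s\<^sup>2 * (2 * t1 + 8 * K * (\<Sum>j<N. (2^j * t1) powr (2 - p)) + 4 * K * ((1/s)/2) powr (2 - p))"
    using integral_taylor_maj_dyadic[OF g _ K decay s] t1 by auto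
  have "12 * s\<^sup>2 * (2 * t1 + 8 * K * (\<Sum>j<N. (2^j * t1) powr (2 - p)) + 4 * K * ((1/s)/2) powr (2 - p))
      \<le> 12 * s\<^sup>2 * (2 * t1 + B * (1/s) powr (2 - p))"
    unfolding B_def using dyadic_bracket_pos[OF _ _ K N] p t1 by (intro mult_left_mono) auto
  also have "\<dots> = 24 * t1 * s\<^sup>2 + 12 * B * (s\<^sup>2 * (1/s) powr (2 - p))"
    by (simp add: algebra_simps)
  also have "s\<^sup>2 * (1/s) powr (2 - p) = s powr p"
    using s by (simp add: powr_divide powr_minus_divide powr_diff flip: powr_numeral)
  also have "24 * t1 * s\<^sup>2 \<le> 24 * t1 * s powr p"
  proof -
    have "s \<le> 1" using s t1 order_trans[OF s(2), of 1] by (simp add: field_simps)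
    then have "s\<^sup>2 \<le> s powr p" using s p powr_mono'[of p 2 s] by (simp flip: powr_numeral)
    then show ?thesis using t1 by simp
  qed
  finally show "(\<integral>w. taylor_maj (s * g w) \<partial>mu) \<le> (24 * t1 + 12 * B) * s powr p"
    using Q by (simp add: distrib_right)
qed

text \<open>Case \<open>p = 2\<close>: \<open>\<integral> Q(s g) = O(s\<^sup>2 |log s|)\<close>; the dyadic sum now counts
  the \<open>log\<^sub>2 (1/s)\<close> levels.\<close>
lemma taylor_remainder_eq2:
  assumes t1: "1 \<le> t1" and K: "0 \<le> K"
  obtains C where "0 \<le> C"
    "\<And>g s. integrable mu g \<Longrightarrow> L1_norm mu g \<le> 1 \<Longrightarrow> (\<And>t. t1 \<le> t \<Longrightarrow> tail_int mu g t \<le> K * t powr (1 - 2))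
       \<Longrightarrow> 0 < s \<Longrightarrow> s \<le> min (1 / (2 * t1)) (exp (-1))
       \<Longrightarrow> (\<integral>w. taylor_maj (s * g w) \<partial>mu) \<le> C * (s\<^sup>2 * \<bar>ln s\<bar>)"
proof
  show "0 \<le> 12 * (2 * t1 + 8 * K / ln 2 + 4 * K)" using t1 K by simp
  fix g and s :: real
  assume g: "integrable mu g" "L1_norm mu g \<le> 1"
    and decay: "\<And>t. t1 \<le> t \<Longrightarrow> tail_int mu g t \<le> K * t powr (1 - 2)"
    and s: "0 < s" "s \<le> min (1 / (2 * t1)) (exp (-1))"
  define T where "T = 1/s"
  have T: "0 < T" unfolding T_def using s by simp
  have s2: "s \<le> 1 / (2 * t1)" using s by simp
  obtain N where "2^N * t1 \<le> 1/s" and Q: "(\<integral>w. taylor_maj (s * g w) \<partial>mu) \<le>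
       12 * s\<^sup>2 * (2 * t1 + 8 * K * (\<Sum>j<N. (2^j * t1) powr (2 - 2)) + 4 * K * ((1/s)/2) powr (2 - 2))"
    by (rule integral_taylor_maj_dyadic[OF g _ K decay s(1) s2]) (use t1 in simp)
  then have N: "2^N * t1 \<le> T" unfolding T_def by simp
  have "(\<Sum>j<N. (2^j * t1) powr (2 - 2)) = real N" "((1/s)/2) powr (2 - 2) = 1" using t1 s by auto
  with Q have Q: "(\<integral>w. taylor_maj (s * g w) \<partial>mu) \<le> 12 * s\<^sup>2 * (2 * t1 + 8 * K * real N + 4 * K)"
    by (simp only: mult_1_right)
  have "ln s \<le> ln (exp (-1))" using s by (subst ln_le_cancel_iff) auto
  then have lnT: "1 \<le> ln T" using s unfolding T_def by (simp add: ln_div)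
  have "(2::real)^N \<le> T" using N t1 order_trans[of "2^N" "2^N * t1" T] by simp
  then have "real N * ln 2 \<le> ln T" using T by (simp add: ln_realpow flip: ln_le_cancel_iff)
  then have "2 * t1 + 8 * K * real N + 4 * K \<le> 2 * t1 + 8 * K * (ln T / ln 2) + 4 * K"
    using K by (simp add: field_simps mult_left_mono)
  also have "\<dots> \<le> (2 * t1 + 8 * K / ln 2 + 4 * K) * ln T"
    using lnT t1 K mult_left_mono[OF lnT, of "2 * t1 + 4 * K"] by (simp add: algebra_simps)
  finally have "12 * s\<^sup>2 * (2 * t1 + 8 * K * real N + 4 * K)
      \<le> 12 * s\<^sup>2 * ((2 * t1 + 8 * K / ln 2 + 4 * K) * ln T)"
    by (rule mult_left_mono) simp
  then have "(\<integral>w. taylor_maj (s * g w) \<partial>mu) \<le> 12 * s\<^sup>2 * ((2 * t1 + 8 * K / ln 2 + 4 * K) * ln T)"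
    using Q by linarith
  also have "ln T = \<bar>ln s\<bar>" using s lnT unfolding T_def by (simp add: ln_div)
  finally show "(\<integral>w. taylor_maj (s * g w) \<partial>mu) \<le> 12 * (2 * t1 + 8 * K / ln 2 + 4 * K) * (s\<^sup>2 * \<bar>ln s\<bar>)"
    by (simp only: mult_ac)
qed

lemma rho_mod_bigO:
  fixes \<psi> :: "real \<Rightarrow> real"
  assumes P: "prob_space mu" and Xint: "X \<subseteq> {f. integrable mu f}" and s0: "0 < s0" and C: "0 \<le> C"
    and maj: "\<And>g s. g \<in> X \<Longrightarrow> L1_norm mu g \<le> 1 \<Longrightarrow> 0 < s \<Longrightarrow> s \<le> s0
                \<Longrightarrow> (\<integral>w. taylor_maj (s * g w) \<partial>mu) \<le> C * \<psi> s"
    and scale: "eventually (\<lambda>\<tau>. \<psi> (1440 * \<tau>) \<le> A * \<psi> \<tau>) (at_right 0)"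
    and small: "((\<lambda>\<tau>. \<psi> \<tau> / \<tau>) \<longlongrightarrow> 0) (at_right 0)"
  shows "\<exists>B. eventually (\<lambda>\<tau>. rho_mod mu X \<tau> \<le> ereal (B * \<psi> \<tau>)) (at_right 0)"
proof -
  have "((\<lambda>\<tau>. C * (1 + A) * (\<psi> \<tau> / \<tau>)) \<longlongrightarrow> 0) (at_right 0)"
    by (rule tendsto_mult_right_zero[OF small])
  then have "eventually (\<lambda>\<tau>. C * (1 + A) * (\<psi> \<tau> / \<tau>) < 1) (at_right 0)"
    by (rule order_tendstoD) simp
  moreover have "eventually (\<lambda>\<tau>. 0 < \<tau> \<and> 1440 * \<tau> \<le> s0 \<and> \<tau> \<le> 1/2880) (at_right (0::real))"
    unfolding eventually_at_right_field
    by (rule exI[of _ "min (s0/1440) (1/2880)"]) (use s0 in auto)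
  ultimately have "eventually (\<lambda>\<tau>. rho_mod mu X \<tau> \<le> ereal (1152 * C * (1 + A) * \<psi> \<tau>)) (at_right 0)"
    using scale
  proof eventually_elim
    case (elim \<tau>)
    have "C * \<psi> \<tau> + C * \<psi> (1440 * \<tau>) \<le> C * (1 + A) * \<psi> \<tau>"
      using mult_left_mono[OF elim(3) C] by (simp add: algebra_simps)
    also have "\<dots> \<le> \<tau>"
      using elim(1,2) by (simp add: field_simps)
    finally have small_\<tau>: "C * \<psi> \<tau> + C * \<psi> (1440 * \<tau>) \<le> \<tau>" .
    have "rho_mod mu X \<tau> \<le> ereal (1152 * (C * \<psi> \<tau> + C * \<psi> (1440 * \<tau>)))"
      by (rule rho_mod_le_remainder[OF P Xint maj]) (use elim small_\<tau> in auto)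
    also have "\<dots> \<le> ereal (1152 * C * (1 + A) * \<psi> \<tau>)"
      using mult_left_mono[OF elim(3) C] by (simp add: algebra_simps)
    finally show ?case .
  qed
  then show ?thesis by blast
qed

lemma rho_mod_gt2:
  assumes P: "prob_space mu" and Xint: "X \<subseteq> {f. integrable mu f}"
    and t1: "1 \<le> t1" and K: "0 \<le> K" and p: "2 < p"
    and decay: "\<And>g t. g \<in> X \<Longrightarrow> L1_norm mu g \<le> 1 \<Longrightarrow> t1 \<le> t \<Longrightarrow> tail_int mu g t \<le> K * t powr (1 - p)"
  shows "\<exists>C. eventually (\<lambda>\<tau>. rho_mod mu X \<tau> \<le> ereal (C * \<tau>\<^sup>2)) (at_right 0)"
proof -
  obtain C where C: "0 \<le> C" and maj: "\<And>g s. integrable mu g \<Longrightarrow> L1_norm mu g \<le> 1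
      \<Longrightarrow> (\<And>t. t1 \<le> t \<Longrightarrow> tail_int mu g t \<le> K * t powr (1 - p))
      \<Longrightarrow> 0 < s \<Longrightarrow> s \<le> 1 / (2 * t1) \<Longrightarrow> (\<integral>w. taylor_maj (s * g w) \<partial>mu) \<le> C * s\<^sup>2"
    using taylor_remainder_gt2[OF t1 K p, where mu = mu] by blast
  show ?thesis
  proof (rule rho_mod_bigO[OF P Xint _ C, where \<psi> = "\<lambda>\<tau>. \<tau>\<^sup>2" and A = "1440\<^sup>2"])
    show "eventually (\<lambda>\<tau>::real. (1440 * \<tau>)\<^sup>2 \<le> 1440\<^sup>2 * \<tau>\<^sup>2) (at_right 0)"
      by (simp add: power_mult_distrib)
    show "((\<lambda>\<tau>::real. \<tau>\<^sup>2 / \<tau>) \<longlongrightarrow> 0) (at_right 0)" by real_asymp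
  qed (use t1 Xint decay in \<open>auto intro!: maj\<close>)
qed

lemma rho_mod_lt2:
  assumes P: "prob_space mu" and Xint: "X \<subseteq> {f. integrable mu f}"
    and t1: "1 \<le> t1" and K: "0 \<le> K" and p: "1 < p" "p < 2"
    and decay: "\<And>g t. g \<in> X \<Longrightarrow> L1_norm mu g \<le> 1 \<Longrightarrow> t1 \<le> t \<Longrightarrow> tail_int mu g t \<le> K * t powr (1 - p)"
  shows "\<exists>C. eventually (\<lambda>\<tau>. rho_mod mu X \<tau> \<le> ereal (C * \<tau> powr p)) (at_right 0)"
proof -
  obtain C where C: "0 \<le> C" and maj: "\<And>g s. integrable mu g \<Longrightarrow> L1_norm mu g \<le> 1
      \<Longrightarrow> (\<And>t. t1 \<le> t \<Longrightarrow> tail_int mu g t \<le> K * t powr (1 - p))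
      \<Longrightarrow> 0 < s \<Longrightarrow> s \<le> 1 / (2 * t1) \<Longrightarrow> (\<integral>w. taylor_maj (s * g w) \<partial>mu) \<le> C * s powr p"
    using taylor_remainder_lt2[OF t1 K p, where mu = mu] by blast
  show ?thesis
  proof (rule rho_mod_bigO[OF P Xint _ C, where \<psi> = "\<lambda>\<tau>. \<tau> powr p" and A = "1440 powr p"])
    show "eventually (\<lambda>\<tau>. (1440 * \<tau>) powr p \<le> 1440 powr p * \<tau> powr p) (at_right 0)"
      by (rule eventually_at_rightI[of 0 1]) (simp_all add: powr_mult)
    show "((\<lambda>\<tau>::real. \<tau> powr p / \<tau>) \<longlongrightarrow> 0) (at_right 0)" using p by real_asymp
  qed (use t1 Xint decay in \<open>auto intro!: maj\<close>)
qed

lemma rho_mod_eq2: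
  assumes P: "prob_space mu" and Xint: "X \<subseteq> {f. integrable mu f}"
    and t1: "1 \<le> t1" and K: "0 \<le> K"
    and decay: "\<And>g t. g \<in> X \<Longrightarrow> L1_norm mu g \<le> 1 \<Longrightarrow> t1 \<le> t \<Longrightarrow> tail_int mu g t \<le> K * t powr (1 - 2)"
  shows "\<exists>C. eventually (\<lambda>\<tau>. rho_mod mu X \<tau> \<le> ereal (C * \<tau>\<^sup>2 * \<bar>ln \<tau>\<bar>)) (at_right 0)"
proof -
  obtain C where C: "0 \<le> C" and maj: "\<And>g s. integrable mu g \<Longrightarrow> L1_norm mu g \<le> 1
      \<Longrightarrow> (\<And>t. t1 \<le> t \<Longrightarrow> tail_int mu g t \<le> K * t powr (1 - 2))
      \<Longrightarrow> 0 < s \<Longrightarrow> s \<le> min (1 / (2 * t1)) (exp (-1))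
      \<Longrightarrow> (\<integral>w. taylor_maj (s * g w) \<partial>mu) \<le> C * (s\<^sup>2 * \<bar>ln s\<bar>)"
    using taylor_remainder_eq2[OF t1 K, where mu = mu] by blast
  have "\<exists>B. eventually (\<lambda>\<tau>. rho_mod mu X \<tau> \<le> ereal (B * (\<tau>\<^sup>2 * \<bar>ln \<tau>\<bar>))) (at_right 0)"
  proof (rule rho_mod_bigO[OF P Xint _ C, where \<psi> = "\<lambda>\<tau>. \<tau>\<^sup>2 * \<bar>ln \<tau>\<bar>" and A = "1440\<^sup>2"])
    show "eventually (\<lambda>\<tau>::real. (1440 * \<tau>)\<^sup>2 * \<bar>ln (1440 * \<tau>)\<bar> \<le> 1440\<^sup>2 * (\<tau>\<^sup>2 * \<bar>ln \<tau>\<bar>))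
            (at_right 0)"
    proof (rule eventually_at_rightI[of 0 "1/1440"])
      fix \<tau> :: real assume "\<tau> \<in> {0<..<1/1440}"
      then have "ln (1440 * \<tau>) < 0" "ln (1440 * \<tau>) = ln 1440 + ln \<tau>"
        by (auto intro: ln_less_zero simp del: ln_mult) (simp add: ln_mult)
      then have "\<bar>ln (1440 * \<tau>)\<bar> = - ln 1440 - ln \<tau>" by simp
      moreover have "0 < ln (1440::real)" "- ln \<tau> \<le> \<bar>ln \<tau>\<bar>" by simp_all
      ultimately have "\<bar>ln (1440 * \<tau>)\<bar> \<le> \<bar>ln \<tau>\<bar>" by linarith
      then show "(1440 * \<tau>)\<^sup>2 * \<bar>ln (1440 * \<tau>)\<bar> \<le> 1440\<^sup>2 * (\<tau>\<^sup>2 * \<bar>ln \<tau>\<bar>)"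
        by (simp add: power_mult_distrib mult_left_mono)
    qed simp
    show "((\<lambda>\<tau>::real. \<tau>\<^sup>2 * \<bar>ln \<tau>\<bar> / \<tau>) \<longlongrightarrow> 0) (at_right 0)" by real_asymp
  qed (use t1 Xint decay in \<open>auto intro!: maj\<close>)
  then show ?thesis by (simp add: mult.assoc)
qed

theorem corollary1p4:
  fixes mu :: "'a measure" and X :: "('a \<Rightarrow> real) set" and p :: real
  assumes "prob_space mu"
    and "closed_L1_subspace mu X"
    and "p > 1"
    and "\<exists>C. eventually (\<lambda>t. G_fun mu X t \<le> ennreal (C / t powr (p - 1))) at_top"
  shows "(p > 2 \<longrightarrow> (\<exists>C. eventually (\<lambda>\<tau>. rho_mod mu X \<tau> \<le> ereal (C * \<tau>\<^sup>2)) (at_right 0)))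
       \<and> (p < 2 \<longrightarrow> (\<exists>C. eventually (\<lambda>\<tau>. rho_mod mu X \<tau> \<le> ereal (C * \<tau> powr p)) (at_right 0)))
       \<and> (p = 2 \<longrightarrow> (\<exists>C. eventually (\<lambda>\<tau>. rho_mod mu X \<tau> \<le> ereal (C * \<tau>\<^sup>2 * \<bar>ln \<tau>\<bar>)) (at_right 0)))"
proof -
  have fin: "finite_measure mu" using assms(1) by (simp add: prob_space_def)
  obtain t1 K where t1: "1 \<le> t1" and K: "0 \<le> K"
    and decay: "\<And>g t. g \<in> X \<Longrightarrow> L1_norm mu g \<le> 1 \<Longrightarrow> t1 \<le> t \<Longrightarrow> tail_int mu g t \<le> K * t powr (1 - p)"
    using tail_decay[OF fin assms(2,4)] by blast
  have Xint: "X \<subseteq> {f. integrable mu f}" using assms(2) unfolding closed_L1_subspace_def by auto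
  show ?thesis
    using rho_mod_gt2[OF assms(1) Xint t1 K _ decay] rho_mod_lt2[OF assms(1) Xint t1 K assms(3) _ decay]
      rho_mod_eq2[OF assms(1) Xint t1 K] decay
    by auto
qed

end
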